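(* Let $p$ be a NetKAT program in which every occurrence of $\mathsf{dup}$ carries a distinct positive label, and let $A(p)=(S,s_0,\epsilon,\delta)$ be its program automaton. For all packets $pk_{in},pk_1,\dots,pk_n,pk_{out}$ ($n\ge 0$), with $h=pk_{out}::pk_n::\cdots::\langle pk_1\rangle$ (so $h=\langle pk_{out}\rangle$ when $n=0$), we have $h\in[\![p]\!]\langle pk_{in}\rangle$ if and only if $\mathrm{accept}\ s_0\ (pk_{in}\cdot pk_1\cdot\mathsf{dup}\cdots pk_n\cdot\mathsf{dup}\cdot pk_{out})$.
   Context: NetKAT. Fix finitely many fields $f$ with natural-number values. A packet $pk$ assigns a value $pk.f$ to each field; $pk[f:=n]$ is the update. A history is a nonempty list of packets, written $pk::h$ or $\langle pk\rangle$. Predicates: $a ::= 1 \mid 0 \mid f=n \mid a+b \mid a\cdot b \mid \neg a$. Programs: $p ::= a \mid f\leftarrow n \mid p+q \mid p\cdot q \mid p^* \mid \mathsf{dup}^\ell$ with labels $\ell$. Semantics: $[\![1]\!]h=\{h\}$; $[\![0]\!]h=\emptyset$; $[\![f=n]\!](pk::h)=\{pk::h\}$ if $pk.f=n$, else $\emptyset$; $[\![\neg a]\!]h=\{h\}\setminus[\![a]\!]h$; $[\![f\leftarrow n]\!](pk::h)=\{pk[f:=n]::h\}$; $[\![p+q]\!]h=[\![p]\!]h\cup[\![q]\!]h$; $[\![p\cdot q]\!]h=\bigcup_{h'\in[\![p]\!]h}[\![q]\!]h'$; $[\![p^*]\!]h=\bigcup_iF^ih$ with $F^0h=\{h\}$,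 $F^{i+1}h=\bigcup_{h'\in[\![p]\!]h}F^ih'$; $[\![\mathsf{dup}^\ell]\!](pk::h)=\{pk::pk::h\}$. $\mathcal{E}$ and $\mathcal{D}$: $\mathcal{E}(a)=a$, $\mathcal{D}(a)=\emptyset$; $\mathcal{E}(f\leftarrow n)=f\leftarrow n$, $\mathcal{D}(f\leftarrow n)=\emptyset$; $\mathcal{E}(\mathsf{dup}^\ell)=0$, $\mathcal{D}(\mathsf{dup}^\ell)=\{(1,\ell,1)\}$; $\mathcal{E}(q+r)=\mathcal{E}(q)+\mathcal{E}(r)$, $\mathcal{D}(q+r)=\mathcal{D}(q)\cup\mathcal{D}(r)$; $\mathcal{E}(q\cdot r)=\mathcal{E}(q)\cdot\mathcal{E}(r)$, $\mathcal{D}(q\cdot r)=\{(d,\ell,k\cdot r)\mid(d,\ell,k)\in\mathcal{D}(q)\}\cup\{(\mathcal{E}(q)\cdot d,\ell,k)\mid(d,\ell,k)\in\mathcal{D}(r)\}$; $\mathcal{E}(q^* )=\mathcal{E}(q)^*$, $\mathcal{D}(q^* )=\{(\mathcal{E}(q)^*\cdot d,\ell,k\cdot q^* )\mid(d,\ell,k)\in\mathcal{D}(q)\}$. For each label $\ell$ occurring in $p$ there is exactly one triple $(d,\ell,k)\in\mathcal{D}(p)$; write $k_\ell$ for its $k$ (the continuation of $\mathsf{dup}^\ell$), and set $k_0=p$. NetKAT automaton: a tuple $(S,s_0,\epsilon,\delta)$ with $S$ finite, $s_0\in S$, $\epsilon:S\to\mathrm{Pk}\to\mathcal{P}(\mathrm{Pk})$,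 $\delta:S\to\mathrm{Pk}\to\mathcal{P}(\mathrm{Pk}\times S)$. Its inputs are strings $pk_{in}\cdot pk_1\cdot\mathsf{dup}\cdots pk_n\cdot\mathsf{dup}\cdot pk_{out}$; acceptance: $\mathrm{accept}\ s\ (pk_{in}\cdot pk_{out})\iff pk_{out}\in\epsilon\,s\,pk_{in}$, and $\mathrm{accept}\ s\ (pk_{in}\cdot pk_1\cdot\mathsf{dup}\cdot w)\iff$ there is $(pk_1,s')\in\delta\,s\,pk_{in}$ with $\mathrm{accept}\ s'\ (pk_1\cdot w)$. Program automaton $A(p)$: $S$ is the set of labels occurring in $p$ together with $0$; $s_0=0$; $\epsilon\,\ell\,pk=\{pk'\mid\langle pk'\rangle\in[\![\mathcal{E}(k_\ell)]\!]\langle pk\rangle\}$; $\delta\,\ell\,pk=\{(pk',\ell')\mid(d,\ell',k)\in\mathcal{D}(k_\ell),\ \langle pk'\rangle\in[\![d]\!]\langle pk\rangle\}$. *)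

theory Defs
  imports Main
begin

text \<open>Packets assign a natural number to each of finitely many fields (type 'f).
  Histories are nonempty lists of packets, head = current packet.\<close>

type_synonym 'f pk = "'f \<Rightarrow> nat"
type_synonym 'f hist = "'f pk list"

datatype 'f pred = PTrue | PFalse | PEq 'f nat | POr "'f pred" "'f pred"
  | PAnd "'f pred" "'f pred" | PNot "'f pred"

datatype 'f prog = Test "'f pred" | Assign 'f nat | Plus "'f prog" "'f prog"
  | Seq "'f prog" "'f prog" | Star "'f prog" | Dup nat

fun psem :: "'f pred \<Rightarrow> 'f hist \<Rightarrow> 'f hist set" where
  "psem PTrue h = {h}"
| "psem PFalse h = {}"
| "psem (PEq f n) [] = {}"
| "psem (PEq f n) (pk # h) = (if pk f = n then {pk # h} else {})"
| "psem (POr a b) h = psem a h \<union> psem b h"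
| "psem (PAnd a b) h = (\<Union>h'\<in>psem a h. psem b h')"
| "psem (PNot a) h = {h} - psem a h"

primrec starF :: "('f hist \<Rightarrow> 'f hist set) \<Rightarrow> nat \<Rightarrow> 'f hist \<Rightarrow> 'f hist set" where
  "starF P 0 h = {h}"
| "starF P (Suc i) h = (\<Union>h'\<in>P h. starF P i h')"

primrec sem :: "'f prog \<Rightarrow> 'f hist \<Rightarrow> 'f hist set" where
  "sem (Test a) = psem a"
| "sem (Assign f n) = (\<lambda>h. case h of [] \<Rightarrow> {} | pk # t \<Rightarrow> {(pk(f := n)) # t})"
| "sem (Plus p q) = (\<lambda>h. sem p h \<union> sem q h)"
| "sem (Seq p q) = (\<lambda>h. \<Union>h'\<in>sem p h. sem q h')"
| "sem (Star p) = (\<lambda>h. \<Union>i. starF (sem p) i h)"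
| "sem (Dup l) = (\<lambda>h. case h of [] \<Rightarrow> {} | pk # t \<Rightarrow> {pk # pk # t})"

primrec labels :: "'f prog \<Rightarrow> nat list" where
  "labels (Test a) = []"
| "labels (Assign f n) = []"
| "labels (Plus p q) = labels p @ labels q"
| "labels (Seq p q) = labels p @ labels q"
| "labels (Star p) = labels p"
| "labels (Dup l) = [l]"

primrec E :: "'f prog \<Rightarrow> 'f prog" where
  "E (Test a) = Test a"
| "E (Assign f n) = Assign f n"
| "E (Plus q r) = Plus (E q) (E r)"
| "E (Seq q r) = Seq (E q) (E r)"
| "E (Star q) = Star (E q)"
| "E (Dup l) = Test PFalse"

primrec D :: "'f prog \<Rightarrow> ('f prog \<times> nat \<times> 'f prog) set" where
  "D (Test a) = {}"
| "D (Assign f n) = {}"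
| "D (Plus q r) = D q \<union> D r"
| "D (Seq q r) = {(d, l, Seq k r) | d l k. (d, l, k) \<in> D q}
                \<union> {(Seq (E q) d, l, k) | d l k. (d, l, k) \<in> D r}"
| "D (Star q) = {(Seq (Star (E q)) d, l, Seq k (Star q)) | d l k. (d, l, k) \<in> D q}"
| "D (Dup l) = {(Test PTrue, l, Test PTrue)}"

definition cont :: "'f prog \<Rightarrow> nat \<Rightarrow> 'f prog" where
  "cont p l = (if l = 0 then p else (THE k. \<exists>d. (d, l, k) \<in> D p))"

type_synonym ('s, 'f) nk_automaton =
  "'s set \<times> 's \<times> ('s \<Rightarrow> 'f pk \<Rightarrow> 'f pk set) \<times> ('s \<Rightarrow> 'f pk \<Rightarrow> ('f pk \<times> 's) set)"

text \<open>accept A s pk_in [pk_1,...,pk_n] pk_out models acceptance of the string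
  pk_in . pk_1 . dup ... pk_n . dup . pk_out from state s.\<close>
fun accept :: "('s, 'f) nk_automaton \<Rightarrow> 's \<Rightarrow> 'f pk \<Rightarrow> 'f pk list \<Rightarrow> 'f pk \<Rightarrow> bool" where
  "accept (S, s0, eps, delta) s pkin [] pkout = (pkout \<in> eps s pkin)"
| "accept (S, s0, eps, delta) s pkin (pk1 # w) pkout =
     (\<exists>s'. (pk1, s') \<in> delta s pkin \<and> accept (S, s0, eps, delta) s' pk1 w pkout)"

definition prog_automaton :: "'f prog \<Rightarrow> (nat, 'f) nk_automaton" where
  "prog_automaton p =
    (insert 0 (set (labels p)), 0,
     (\<lambda>l pk. {pk'. [pk'] \<in> sem (E (cont p l)) [pk]}),
     (\<lambda>l pk. {(pk', l'). \<exists>d k. (d, l', k) \<in> D (cont p l) \<and> [pk'] \<in> sem d [pk]}))"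

end

theory Submission
  imports Defs
begin

text \<open>Every run of a program from a one-packet history either performs no \<open>dup\<close>, and is then
  a run of the dup-free part \<open>E p\<close>, or it splits at its first \<open>dup\<close>: some derivative
  \<open>(d, \<ell>, k) \<in> D p\<close> moves the input packet to the packet that is duplicated, and the
  rest of the run is a run of the continuation \<open>k\<close> from that packet. Appending a packet
  at the bottom of a history commutes with the semantics, so the history produced by \<open>k\<close>
  simply sits on top of the duplicated packet. When labels are distinct, the derivatives of a
  continuation of \<open>p\<close> lead again to continuations of \<open>p\<close>, so by induction on the number of
  \<open>dup\<close>s the runs of the continuation of \<open>\<ell>\<close> are exactly the accepting paths of \<open>A(p)\<close> from \<open>\<ell>\<close>.\<close>

lemma psem_subset: "psem a h \<subseteq> {h}"
  by (induction a h rule: psem.induct) auto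

lemma psem_append: "h0 \<noteq> [] \<Longrightarrow> psem a (h0 @ t) = (\<lambda>h. h @ t) ` psem a h0"
proof (induction a arbitrary: h0 t)
  case (PEq f n) then show ?case by (cases h0) auto
next
  case (PAnd a b)
  have "psem (PAnd a b) (h0 @ t) = (\<Union>h'\<in>psem a h0. psem b (h' @ t))"
    by (simp add: PAnd.IH(1)[OF PAnd.prems] image_image)
  also have "\<dots> = (\<Union>h'\<in>psem a h0. (\<lambda>h. h @ t) ` psem b h')"
    using psem_subset[of a h0] PAnd.IH(2) PAnd.prems by (intro SUP_cong) auto
  finally show ?case by (simp add: image_UN)
next
  case (PNot a)
  have "inj (\<lambda>h::'a hist. h @ t)" by (simp add: inj_def)
  then show ?case by (simp add: PNot.IH[OF PNot.prems] image_set_diff)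
qed auto

lemma starF_length_mono:
  assumes "\<And>h0 h. h \<in> P h0 \<Longrightarrow> length h0 \<le> length h"
  shows "h \<in> starF P i h0 \<Longrightarrow> length h0 \<le> length h"
proof (induction i arbitrary: h0)
  case (Suc i)
  then obtain h' where "h' \<in> P h0" "h \<in> starF P i h'" by auto
  then show ?case using Suc.IH assms[of h' h0] by fastforce
qed simp

lemma sem_length_mono: "h \<in> sem x h0 \<Longrightarrow> length h0 \<le> length h"
proof (induction x arbitrary: h0 h)
  case (Test a) then show ?case using psem_subset[of a h0] by auto
next
  case (Seq p q)
  then obtain h' where "h' \<in> sem p h0" "h \<in> sem q h'" by auto
  then show ?case using Seq.IH(1)[of h' h0] Seq.IH(2)[of h h'] by linarith
next
  case (Star p) then show ?case using starF_length_mono[of "sem p", OF Star.IH] by auto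
qed (auto split: list.splits)

lemma sem_nonempty: "h \<in> sem x (pk # t) \<Longrightarrow> h \<noteq> []"
  using sem_length_mono[of h x "pk # t"] by auto

lemma starF_length_eq:
  assumes "\<And>h0 h. h \<in> P h0 \<Longrightarrow> length h = length h0"
  shows "h \<in> starF P i h0 \<Longrightarrow> length h = length h0"
proof (induction i arbitrary: h0)
  case (Suc i)
  then obtain h' where "h' \<in> P h0" "h \<in> starF P i h'" by auto
  then show ?case using Suc.IH assms[of h' h0] by fastforce
qed simp

lemma sem_E_length_eq: "h \<in> sem (E x) h0 \<Longrightarrow> length h = length h0"
proof (induction x arbitrary: h0 h)
  case (Test a) then show ?case using psem_subset[of a h0] by auto
next
  case (Seq p q)
  then obtain h' where "h' \<in> sem (E p) h0" "h \<in> sem (E q) h'" by auto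
  then show ?case using Seq.IH(1)[of h' h0] Seq.IH(2)[of h h'] by simp
next
  case (Star p) then show ?case using starF_length_eq[of "sem (E p)", OF Star.IH] by auto
qed (auto split: list.splits)

lemma sem_E_singleton: "h \<in> sem (E x) [pk] \<Longrightarrow> \<exists>pk'. h = [pk']"
  using sem_E_length_eq[of h x "[pk]"] by (cases h) auto

lemma starF_sem_E_singleton: "h \<in> starF (sem (E x)) i [pk] \<Longrightarrow> \<exists>pk'. h = [pk']"
  using starF_length_eq[where P="sem (E x)", OF sem_E_length_eq] by (cases h) fastforce+

lemma starF_append:
  assumes "\<And>h0 t. h0 \<noteq> [] \<Longrightarrow> P (h0 @ t) = (\<lambda>h. h @ t) ` P h0"
    and "\<And>h0 h. h \<in> P h0 \<Longrightarrow> length h0 \<le> length h"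
  shows "h0 \<noteq> [] \<Longrightarrow> starF P i (h0 @ t) = (\<lambda>h. h @ t) ` starF P i h0"
proof (induction i arbitrary: h0)
  case (Suc i)
  have "starF P (Suc i) (h0 @ t) = (\<Union>h'\<in>P h0. starF P i (h' @ t))"
    using assms(1)[OF Suc.prems] by simp
  also have "\<dots> = (\<Union>h'\<in>P h0. (\<lambda>h. h @ t) ` starF P i h')"
  proof (rule SUP_cong[OF refl])
    fix h' assume "h' \<in> P h0"
    then have "h' \<noteq> []" using assms(2)[of h' h0] Suc.prems by auto
    then show "starF P i (h' @ t) = (\<lambda>h. h @ t) ` starF P i h'" by (rule Suc.IH)
  qed
  finally show ?case by (simp add: image_UN)
qed simp

lemma sem_append: "h0 \<noteq> [] \<Longrightarrow> sem x (h0 @ t) = (\<lambda>h. h @ t) ` sem x h0"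
proof (induction x arbitrary: h0 t)
  case (Seq p q)
  have "sem (Seq p q) (h0 @ t) = (\<Union>h'\<in>sem p h0. sem q (h' @ t))"
    by (simp add: Seq.IH(1)[OF Seq.prems] image_image)
  also have "\<dots> = (\<Union>h'\<in>sem p h0. (\<lambda>h. h @ t) ` sem q h')"
  proof (rule SUP_cong[OF refl])
    fix h' assume "h' \<in> sem p h0"
    then have "h' \<noteq> []" using sem_length_mono[of h' p h0] Seq.prems by auto
    then show "sem q (h' @ t) = (\<lambda>h. h @ t) ` sem q h'" by (rule Seq.IH(2))
  qed
  finally show ?case by (simp add: image_UN)
next
  case (Star p)
  then show ?case by (simp add: starF_append[of "sem p", OF Star.IH sem_length_mono] image_UN)
qed (auto simp: psem_append image_Un neq_Nil_conv)

lemma mem_sem_append_singleton: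
  "h0 \<noteq> [] \<Longrightarrow> x \<in> sem r (h0 @ [pk]) \<longleftrightarrow> (\<exists>h. x = h @ [pk] \<and> h \<in> sem r h0)"
  using sem_append[of h0 r "[pk]"] by blast

lemma starF_sem_append: "h0 \<noteq> [] \<Longrightarrow> starF (sem r) i (h0 @ t) = (\<lambda>h. h @ t) ` starF (sem r) i h0"
  by (rule starF_append[OF sem_append sem_length_mono])

lemma mem_starF_sem_append_singleton:
  "h0 \<noteq> [] \<Longrightarrow> x \<in> starF (sem r) i (h0 @ [pk]) \<longleftrightarrow> (\<exists>h. x = h @ [pk] \<and> h \<in> starF (sem r) i h0)"
  using starF_sem_append[of h0 r i "[pk]"] by blast

lemma starF_trans: "h1 \<in> starF P i h0 \<Longrightarrow> h2 \<in> starF P j h1 \<Longrightarrow> h2 \<in> starF P (i + j) h0"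
  by (induction i arbitrary: h0) auto

definition run_decomp :: "'f prog \<Rightarrow> 'f pk \<Rightarrow> 'f hist \<Rightarrow> bool" where
  "run_decomp x pk h \<longleftrightarrow> (\<exists>pk'. h = [pk'] \<and> [pk'] \<in> sem (E x) [pk]) \<or>
     (\<exists>d l k pk1 h'. (d, l, k) \<in> D x \<and> [pk1] \<in> sem d [pk] \<and> h' \<in> sem k [pk1] \<and> h = h' @ [pk1])"

lemma run_decomp_Plus: "run_decomp (Plus q r) pk h \<longleftrightarrow> run_decomp q pk h \<or> run_decomp r pk h"
  unfolding run_decomp_def by (simp only: E.simps D.simps sem.simps Un_iff) blast

lemma run_decomp_Seq_of_sem:
  assumes IHq: "\<And>pk h. h \<in> sem q [pk] \<longleftrightarrow> run_decomp q pk h"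
    and IHr: "\<And>pk h. h \<in> sem r [pk] \<longleftrightarrow> run_decomp r pk h"
    and run: "h \<in> sem (Seq q r) [pk]"
  shows "run_decomp (Seq q r) pk h"
proof -
  from run obtain h1 where h1: "h1 \<in> sem q [pk]" "h \<in> sem r h1" by auto
  from h1(1) IHq have "run_decomp q pk h1" by blast
  then show ?thesis unfolding run_decomp_def[of q]
  proof (elim disjE exE conjE)
    fix pk' assume q_E: "h1 = [pk']" "[pk'] \<in> sem (E q) [pk]"
    with h1(2) IHr have "run_decomp r pk' h" by blast
    then show ?thesis unfolding run_decomp_def[of r]
    proof (elim disjE exE conjE)
      fix pk'' assume "h = [pk'']" "[pk''] \<in> sem (E r) [pk']"
      with q_E(2) show ?thesis unfolding run_decomp_def by auto
    next
      fix d l k pk1 h' assume r_D: "(d, l, k) \<in> D r" "[pk1] \<in> sem d [pk']" "h' \<in> sem k [pk1]"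
        "h = h' @ [pk1]"
      have "(Seq (E q) d, l, k) \<in> D (Seq q r)" using r_D(1) by auto
      moreover have "[pk1] \<in> sem (Seq (E q) d) [pk]" using q_E(2) r_D(2) by auto
      ultimately show ?thesis using r_D(3,4) unfolding run_decomp_def by blast
    qed
  next
    fix d l k pk1 h'' assume q_D: "(d, l, k) \<in> D q" "[pk1] \<in> sem d [pk]" "h'' \<in> sem k [pk1]"
      "h1 = h'' @ [pk1]"
    then have "h'' \<noteq> []" using sem_nonempty by blast
    with h1(2) q_D(4) obtain h3 where "h = h3 @ [pk1]" "h3 \<in> sem r h''"
      using mem_sem_append_singleton by blast
    moreover have "(d, l, Seq k r) \<in> D (Seq q r)" using q_D(1) by auto
    moreover have "h3 \<in> sem (Seq k r) [pk1]" using q_D(3) \<open>h3 \<in> sem r h''\<close> by auto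
    ultimately show ?thesis using q_D(2) unfolding run_decomp_def by blast
  qed
qed

lemma sem_Seq_of_run_decomp:
  assumes IHq: "\<And>pk h. h \<in> sem q [pk] \<longleftrightarrow> run_decomp q pk h"
    and IHr: "\<And>pk h. h \<in> sem r [pk] \<longleftrightarrow> run_decomp r pk h"
    and run: "run_decomp (Seq q r) pk h"
  shows "h \<in> sem (Seq q r) [pk]"
  using run unfolding run_decomp_def
proof (elim disjE exE conjE)
  fix pk' assume "h = [pk']" "[pk'] \<in> sem (E (Seq q r)) [pk]"
  then obtain h2 where h2: "h2 \<in> sem (E q) [pk]" "[pk'] \<in> sem (E r) h2" by auto
  then obtain pk2 where "h2 = [pk2]" using sem_E_singleton by blast
  with h2 IHq IHr have "[pk2] \<in> sem q [pk]" "[pk'] \<in> sem r [pk2]"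
    unfolding run_decomp_def by blast+
  with \<open>h = [pk']\<close> show ?thesis by auto
next
  fix d' l k' pk1 h' assume run_D: "(d', l, k') \<in> D (Seq q r)" "[pk1] \<in> sem d' [pk]"
    "h' \<in> sem k' [pk1]" "h = h' @ [pk1]"
  from run_D(1) consider k where "(d', l, k) \<in> D q" "k' = Seq k r"
    | d where "(d, l, k') \<in> D r" "d' = Seq (E q) d" by auto
  then show ?thesis
  proof cases
    case (1 k)
    with run_D(3) obtain h4 where h4: "h4 \<in> sem k [pk1]" "h' \<in> sem r h4" by auto
    then have "h4 \<noteq> []" using sem_nonempty by blast
    have "h4 @ [pk1] \<in> sem q [pk]" using IHq 1(1) run_D(2) h4(1) unfolding run_decomp_def by blast
    moreover have "h' @ [pk1] \<in> sem r (h4 @ [pk1])"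
      using mem_sem_append_singleton[OF \<open>h4 \<noteq> []\<close>] h4(2) by blast
    ultimately show ?thesis using run_D(4) by auto
  next
    case (2 d)
    with run_D(2) obtain h2 where h2: "h2 \<in> sem (E q) [pk]" "[pk1] \<in> sem d h2" by auto
    then obtain pk2 where "h2 = [pk2]" using sem_E_singleton by blast
    with h2 IHq have "[pk2] \<in> sem q [pk]" unfolding run_decomp_def by blast
    moreover have "h \<in> sem r [pk2]"
      using IHr 2(1) h2(2) \<open>h2 = [pk2]\<close> run_D(3,4) unfolding run_decomp_def by blast
    ultimately show ?thesis by auto
  qed
qed

lemma sem_StarI: "h \<in> starF (sem q) i h0 \<Longrightarrow> h \<in> sem (Star q) h0"
  by auto

lemma sem_D_Star_E_step:
  assumes "(d', l, k') \<in> D (Star q)" "[pk'] \<in> sem (E q) [pk]" "x \<in> sem d' [pk']"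
  shows "x \<in> sem d' [pk]"
proof -
  from assms(1) obtain d where d': "d' = Seq (Star (E q)) d" by auto
  with assms(3) obtain h2 j where "h2 \<in> starF (sem (E q)) j [pk']" "x \<in> sem d h2" by auto
  with assms(2) have "h2 \<in> starF (sem (E q)) (Suc j) [pk]" by auto
  then have "h2 \<in> sem (Star (E q)) [pk]" by (rule sem_StarI)
  with \<open>x \<in> sem d h2\<close> d' show ?thesis by auto
qed

lemma run_decomp_Star_of_starF:
  assumes IH: "\<And>pk h. h \<in> sem q [pk] \<longleftrightarrow> run_decomp q pk h"
  shows "h \<in> starF (sem q) i [pk] \<Longrightarrow> run_decomp (Star q) pk h"
proof (induction i arbitrary: pk h)
  case 0
  have "[pk] \<in> sem (E (Star q)) [pk]" unfolding E.simps by (rule sem_StarI[of _ _ 0]) simp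
  with 0 show ?case unfolding run_decomp_def by auto
next
  case (Suc i)
  from Suc.prems obtain h1 where h1: "h1 \<in> sem q [pk]" "h \<in> starF (sem q) i h1" by auto
  from h1(1) IH have "run_decomp q pk h1" by blast
  then show ?case unfolding run_decomp_def[of q]
  proof (elim disjE exE conjE)
    fix pk' assume q_E: "h1 = [pk']" "[pk'] \<in> sem (E q) [pk]"
    with Suc.IH h1(2) have "run_decomp (Star q) pk' h" by blast
    then show ?thesis unfolding run_decomp_def[of "Star q" pk' h]
    proof (elim disjE exE conjE)
      fix pk'' assume "h = [pk'']" "[pk''] \<in> sem (E (Star q)) [pk']"
      then obtain j where "[pk''] \<in> starF (sem (E q)) j [pk']" by auto
      with q_E(2) have "[pk''] \<in> starF (sem (E q)) (Suc j) [pk]" by auto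
      then have "[pk''] \<in> sem (E (Star q)) [pk]" unfolding E.simps by (rule sem_StarI)
      with \<open>h = [pk'']\<close> show ?thesis unfolding run_decomp_def by auto
    next
      fix d l k pk1 h' assume "(d, l, k) \<in> D (Star q)" "[pk1] \<in> sem d [pk']"
        "h' \<in> sem k [pk1]" "h = h' @ [pk1]"
      then show ?thesis using sem_D_Star_E_step[OF _ q_E(2)] unfolding run_decomp_def by blast
    qed
  next
    fix d l k pk1 h'' assume q_D: "(d, l, k) \<in> D q" "[pk1] \<in> sem d [pk]" "h'' \<in> sem k [pk1]"
      "h1 = h'' @ [pk1]"
    then have "h'' \<noteq> []" using sem_nonempty by blast
    with h1(2) q_D(4) obtain h3 where h3: "h = h3 @ [pk1]" "h3 \<in> starF (sem q) i h''"
      using mem_starF_sem_append_singleton by blast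
    have "(Seq (Star (E q)) d, l, Seq k (Star q)) \<in> D (Star q)" using q_D(1) by auto
    moreover have "[pk] \<in> sem (Star (E q)) [pk]" by (rule sem_StarI[of _ _ 0]) simp
    then have "[pk1] \<in> sem (Seq (Star (E q)) d) [pk]" using q_D(2) by auto
    moreover have "h3 \<in> sem (Seq k (Star q)) [pk1]" using q_D(3) h3(2) by auto
    ultimately show ?thesis using h3(1) unfolding run_decomp_def by blast
  qed
qed

lemma starF_sem_of_starF_sem_E:
  assumes IH: "\<And>pk h. h \<in> sem q [pk] \<longleftrightarrow> run_decomp q pk h"
  shows "[pk'] \<in> starF (sem (E q)) i [pk] \<Longrightarrow> [pk'] \<in> starF (sem q) i [pk]"
proof (induction i arbitrary: pk)
  case (Suc i)
  from Suc.prems obtain h1 where h1: "h1 \<in> sem (E q) [pk]" "[pk'] \<in> starF (sem (E q)) i h1" by auto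
  then obtain pk2 where "h1 = [pk2]" using sem_E_singleton by blast
  with h1 IH Suc.IH have "[pk2] \<in> sem q [pk]" "[pk'] \<in> starF (sem q) i [pk2]"
    unfolding run_decomp_def by blast+
  then show ?case by auto
qed simp

lemma sem_Star_of_run_decomp:
  assumes IH: "\<And>pk h. h \<in> sem q [pk] \<longleftrightarrow> run_decomp q pk h"
    and run: "run_decomp (Star q) pk h"
  shows "h \<in> sem (Star q) [pk]"
  using run unfolding run_decomp_def
proof (elim disjE exE conjE)
  fix pk' assume "h = [pk']" "[pk'] \<in> sem (E (Star q)) [pk]"
  then obtain i where "[pk'] \<in> starF (sem (E q)) i [pk]" by auto
  then have "[pk'] \<in> starF (sem q) i [pk]" using starF_sem_of_starF_sem_E[OF IH] by blast
  with \<open>h = [pk']\<close> show ?thesis by auto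
next
  fix d' l k' pk1 h' assume run_D: "(d', l, k') \<in> D (Star q)" "[pk1] \<in> sem d' [pk]"
    "h' \<in> sem k' [pk1]" "h = h' @ [pk1]"
  from run_D(1) obtain d k where dk: "d' = Seq (Star (E q)) d" "k' = Seq k (Star q)" "(d, l, k) \<in> D q"
    by auto
  from run_D(2) dk obtain h2 i where h2: "h2 \<in> starF (sem (E q)) i [pk]" "[pk1] \<in> sem d h2" by auto
  then obtain pk2 where pk2: "h2 = [pk2]" using starF_sem_E_singleton by blast
  with h2(1) have loops: "[pk2] \<in> starF (sem q) i [pk]" using starF_sem_of_starF_sem_E[OF IH] by blast
  from run_D(3) dk obtain h4 j where h4: "h4 \<in> sem k [pk1]" "h' \<in> starF (sem q) j h4" by auto
  then have "h4 \<noteq> []" using sem_nonempty by blast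
  have "h4 @ [pk1] \<in> sem q [pk2]" using IH dk(3) h2(2) pk2 h4(1) unfolding run_decomp_def by blast
  moreover have "h' @ [pk1] \<in> starF (sem q) j (h4 @ [pk1])"
    using mem_starF_sem_append_singleton[OF \<open>h4 \<noteq> []\<close>] h4(2) by blast
  ultimately have "h' @ [pk1] \<in> starF (sem q) (Suc j) [pk2]" by auto
  then have "h' @ [pk1] \<in> starF (sem q) (i + Suc j) [pk]" using starF_trans[OF loops] by blast
  with run_D(4) show ?thesis by (simp only: sem_StarI)
qed

text \<open>Not a simp rule: its right-hand side contains instances of its left-hand side.\<close>

theorem sem_singleton_iff_run_decomp: "h \<in> sem x [pk] \<longleftrightarrow> run_decomp x pk h"
proof (induction x arbitrary: pk h)
  case (Test a)
  show ?case using psem_subset[of a "[pk]"] unfolding run_decomp_def by auto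
next
  case (Plus q r)
  show ?case using Plus.IH[of h pk] by (simp add: run_decomp_Plus)
next
  case (Seq q r)
  show ?case using run_decomp_Seq_of_sem[OF Seq.IH] sem_Seq_of_run_decomp[OF Seq.IH] by blast
next
  case (Star q)
  show ?case using run_decomp_Star_of_starF[OF Star.IH] sem_Star_of_run_decomp[OF Star.IH] by auto
qed (auto simp: run_decomp_def)

lemma D_label_in_labels: "(d, l, k) \<in> D x \<Longrightarrow> l \<in> set (labels x)"
  by (induction x arbitrary: d l k) auto

lemma D_exists_of_label: "l \<in> set (labels x) \<Longrightarrow> \<exists>d k. (d, l, k) \<in> D x"
proof (induction x)
  case (Seq q r)
  show ?case
  proof (cases "l \<in> set (labels q)")
    case True
    then obtain d k where "(d, l, k) \<in> D q" using Seq.IH(1) by blast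
    then have "(d, l, Seq k r) \<in> D (Seq q r)" by simp
    then show ?thesis by blast
  next
    case False
    then obtain d k where "(d, l, k) \<in> D r" using Seq.IH(2) Seq.prems by auto
    then have "(Seq (E q) d, l, k) \<in> D (Seq q r)" by simp
    then show ?thesis by blast
  qed
next
  case (Star q)
  then obtain d k where "(d, l, k) \<in> D q" by auto
  then have "(Seq (Star (E q)) d, l, Seq k (Star q)) \<in> D (Star q)" by simp
  then show ?case by blast
qed auto

lemma D_cont_unique:
  "distinct (labels x) \<Longrightarrow> (d1, l, k1) \<in> D x \<Longrightarrow> (d2, l, k2) \<in> D x \<Longrightarrow> k1 = k2"
  by (induction x arbitrary: d1 k1 d2 k2) (auto dest: D_label_in_labels)

lemma D_of_D_cont:
  "(d, l, k) \<in> D x \<Longrightarrow> (d', l', k') \<in> D k \<Longrightarrow> \<exists>d''. (d'', l', k') \<in> D x"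
proof (induction x arbitrary: d l k d' l' k')
  case (Plus q r)
  from Plus.prems(1) consider "(d, l, k) \<in> D q" | "(d, l, k) \<in> D r" by auto
  then show ?case
    by cases (use Plus.IH Plus.prems(2) in \<open>fastforce+\<close>)
next
  case (Seq q r)
  from Seq.prems(1) consider k0 where "(d, l, k0) \<in> D q" "k = Seq k0 r"
    | d0 where "(d0, l, k) \<in> D r" by auto
  then show ?case
  proof cases
    case (1 k0)
    from Seq.prems(2) 1(2) consider k1 where "(d', l', k1) \<in> D k0" "k' = Seq k1 r"
      | d1 where "(d1, l', k') \<in> D r" by auto
    then show ?thesis
    proof cases
      case (1 k1)
      then obtain d'' where "(d'', l', k1) \<in> D q" using Seq.IH(1) \<open>(d, l, k0) \<in> D q\<close> by blast
      with 1(2) show ?thesis by auto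
    qed auto
  next
    case (2 d0)
    then obtain d'' where "(d'', l', k') \<in> D r" using Seq.IH(2) Seq.prems(2) by blast
    then show ?thesis by auto
  qed
next
  case (Star q)
  from Star.prems(1) obtain d0 k0 where k0: "(d0, l, k0) \<in> D q" "k = Seq k0 (Star q)" by auto
  from Star.prems(2) k0(2) consider k1 where "(d', l', k1) \<in> D k0" "k' = Seq k1 (Star q)"
    | d1 where "(d1, l', k') \<in> D (Star q)" by auto
  then show ?case
  proof cases
    case (1 k1)
    then obtain d'' where "(d'', l', k1) \<in> D q" using Star.IH k0(1) by blast
    with 1(2) show ?thesis by auto
  qed blast
qed auto

lemma cont_eq_of_D: "distinct (labels p) \<Longrightarrow> (d, l, k) \<in> D p \<Longrightarrow> l \<noteq> 0 \<Longrightarrow> cont p l = k"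
  unfolding cont_def using D_cont_unique by (simp, blast)

lemma D_cont_closed:
  assumes dist: "distinct (labels p)" and pos: "\<forall>l\<in>set (labels p). 0 < l"
    and state: "l = 0 \<or> l \<in> set (labels p)" and step: "(d', l', k') \<in> D (cont p l)"
  shows "l' \<in> set (labels p) \<and> k' = cont p l'"
proof -
  have "\<exists>d''. (d'', l', k') \<in> D p"
  proof (cases "l = 0")
    case True with step show ?thesis unfolding cont_def by auto
  next
    case False
    with state obtain d k where dk: "(d, l, k) \<in> D p" using D_exists_of_label by blast
    with cont_eq_of_D[OF dist dk False] step show ?thesis using D_of_D_cont[OF dk] by simp
  qed
  then obtain d'' where d'': "(d'', l', k') \<in> D p" ..
  then have "l' \<in> set (labels p)" by (rule D_label_in_labels)
  with pos cont_eq_of_D[OF dist d''] show ?thesis by auto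
qed

lemma singleton_in_sem_iff_E: "[pk'] \<in> sem x [pk] \<longleftrightarrow> [pk'] \<in> sem (E x) [pk]"
proof
  assume "[pk'] \<in> sem x [pk]"
  then have "run_decomp x pk [pk']" by (rule sem_singleton_iff_run_decomp[THEN iffD1])
  then show "[pk'] \<in> sem (E x) [pk]" unfolding run_decomp_def
  proof (elim disjE exE conjE)
    fix d l k pk1 h' assume "h' \<in> sem k [pk1]" "[pk'] = h' @ [pk1]"
    with sem_nonempty show ?thesis by (cases h') auto
  qed simp
next
  assume "[pk'] \<in> sem (E x) [pk]"
  then have "run_decomp x pk [pk']" unfolding run_decomp_def by blast
  then show "[pk'] \<in> sem x [pk]" by (rule sem_singleton_iff_run_decomp[THEN iffD2])
qed

lemma snoc_in_sem_iff_D: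
  assumes "h \<noteq> []"
  shows "h @ [pk1] \<in> sem x [pk] \<longleftrightarrow>
    (\<exists>d l k. (d, l, k) \<in> D x \<and> [pk1] \<in> sem d [pk] \<and> h \<in> sem k [pk1])"
proof -
  have "run_decomp x pk (h @ [pk1]) \<longleftrightarrow>
      (\<exists>d l k. (d, l, k) \<in> D x \<and> [pk1] \<in> sem d [pk] \<and> h \<in> sem k [pk1])"
    using assms unfolding run_decomp_def by (auto simp: append_eq_Cons_conv)
  then show ?thesis using sem_singleton_iff_run_decomp[of "h @ [pk1]" x pk] by blast
qed

lemma accept_prog_automaton_Nil:
  "accept (prog_automaton p) l pkin [] pkout \<longleftrightarrow> [pkout] \<in> sem (E (cont p l)) [pkin]"
  unfolding prog_automaton_def by simp

lemma accept_prog_automaton_Cons: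
  "accept (prog_automaton p) l pkin (pk1 # w) pkout \<longleftrightarrow>
   (\<exists>l' d k. (d, l', k) \<in> D (cont p l) \<and> [pk1] \<in> sem d [pkin] \<and> accept (prog_automaton p) l' pk1 w pkout)"
  unfolding prog_automaton_def by auto

lemma accept_prog_automaton_iff_sem_cont:
  assumes dist: "distinct (labels p)" and pos: "\<forall>l\<in>set (labels p). 0 < l"
  shows "l = 0 \<or> l \<in> set (labels p) \<Longrightarrow>
    accept (prog_automaton p) l pkin pks pkout \<longleftrightarrow> pkout # rev pks \<in> sem (cont p l) [pkin]"
proof (induction pks arbitrary: l pkin)
  case Nil
  show ?case by (simp add: accept_prog_automaton_Nil singleton_in_sem_iff_E[of pkout "cont p l"])
next
  case (Cons pk1 w)
  have cont_step: "accept (prog_automaton p) l' pk1 w pkout \<longleftrightarrow> pkout # rev w \<in> sem k [pk1]"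
    if "(d, l', k) \<in> D (cont p l)" for d l' k
    using D_cont_closed[OF dist pos Cons.prems that] Cons.IH by auto
  have "pkout # rev (pk1 # w) \<in> sem (cont p l) [pkin] \<longleftrightarrow>
      (\<exists>d l' k. (d, l', k) \<in> D (cont p l) \<and> [pk1] \<in> sem d [pkin] \<and> pkout # rev w \<in> sem k [pk1])"
    using snoc_in_sem_iff_D[of "pkout # rev w" pk1 "cont p l" pkin] by simp
  with cont_step show ?case unfolding accept_prog_automaton_Cons by blast
qed

theorem theorem2:
  fixes p :: "('f::finite) prog"
    and pkin pkout :: "'f pk"
    and pks :: "'f pk list"
  assumes "distinct (labels p)"
    and "\<forall>l\<in>set (labels p). 0 < l"
  shows "(pkout # rev pks \<in> sem p [pkin]) \<longleftrightarrow>
         accept (prog_automaton p) (fst (snd (prog_automaton p))) pkin pks pkout"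
proof -
  have "fst (snd (prog_automaton p)) = 0" unfolding prog_automaton_def by simp
  moreover have "cont p 0 = p" unfolding cont_def by simp
  ultimately show ?thesis using accept_prog_automaton_iff_sem_cont[OF assms, of 0 pkin pks pkout] by simp
qed

end
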